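(* For every integer $n\ge1$, every $\beta\in[\tfrac12,1]$ and every $x\in\mathbb{R}^n$ with $|x_1|\ge|x_2|\ge\dots\ge|x_n|$, $$\sum_{i=1}^n|x_i|^{\frac{2-\beta}{\beta}}\left(i+\sum_{j>i}\frac{|x_j|}{|x_i|}\right)\le n^\beta\cdot\left(\sum_{i=1}^n|x_i|^{\frac1\beta}\right)^{2-\beta},$$ with equality for $x=c\mathbf{1}$ for any $c\neq0$. *)

theory Defs
  imports Complex_Main
begin

end

theory Submission
  imports Defs "HOL-Analysis.Convex"
begin

text \<open>Put r = (1 - \<beta>) / \<beta>, which lies in [0, 1], and a i = \<bar>x i\<bar>, so that the exponents
  become 2r + 1 and r + 1. The left-hand side is the double sum of L i j over i, j \<in> {1..n},
  where L i j = a i ^ (2r + 1) for j \<le> i and L i j = a i ^ 2r * a j for j > i. Since the a i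
  decrease, every symmetric pair satisfies L i j + L j i \<le> R i j + R j i with
  R i j = a i ^ r * a j ^ (r + 1), so the left-hand side is at most
  (\<Sum> a i ^ r) * (\<Sum> a i ^ (r + 1)). Finally, \<Sum> a i ^ r = \<Sum> (a i ^ (r + 1)) ^ (1 - \<beta>) is at most
  n ^ \<beta> * (\<Sum> a i ^ (r + 1)) ^ (1 - \<beta>) by concavity of t \<mapsto> t ^ (1 - \<beta>).\<close>

lemma powr_cross_le:
  fixes u v r :: real
  assumes "0 \<le> v" "v \<le> u" "0 \<le> r" "r \<le> 1"
  shows "u powr (2*r) * v + v powr (2*r+1) \<le> u powr r * v powr (r+1) + v powr r * u powr (r+1)"
proof (cases "v = 0")
  case False
  then have "0 < v" "0 < u" using assms by auto
  have "v powr (2*r+1) = v powr r * v powr (r+1)"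
    by (simp add: algebra_simps flip: powr_add)
  also have "\<dots> \<le> u powr r * v powr (r+1)"
    using assms by (intro mult_right_mono powr_mono2) auto
  finally have small: "v powr (2*r+1) \<le> u powr r * v powr (r+1)" .
  have "u powr (2*r) * v = u powr (2*r) * v powr (1-r) * v powr r"
    using \<open>0 < v\<close> by (simp add: mult.assoc flip: powr_add)
  also have "\<dots> \<le> u powr (2*r) * u powr (1-r) * v powr r"
    using assms by (intro mult_right_mono mult_left_mono powr_mono2) auto
  also have "\<dots> = v powr r * u powr (r+1)"
    using \<open>0 < u\<close> by (simp add: algebra_simps flip: powr_add)
  finally show ?thesis using small by linarith
qed simp

lemma sum_powr_le_card_powr_sum:
  fixes y :: "'a \<Rightarrow> real"
  assumes "finite I" "I \<noteq> {}" "\<And>i. i \<in> I \<Longrightarrow> 0 \<le> y i" "0 \<le> g" "g \<le> 1"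
  shows "(\<Sum>i\<in>I. y i powr g) \<le> card I powr (1-g) * (\<Sum>i\<in>I. y i) powr g"
proof (cases "(\<Sum>i\<in>I. y i) = 0")
  case True
  then have "\<forall>i\<in>I. y i = 0" using sum_nonneg_eq_0_iff assms(1,3) by blast
  then show ?thesis by simp
next
  case False
  define S where "S = (\<Sum>i\<in>I. y i)"
  define N where "N = real (card I)"
  define m where "m = S / N"
  have "0 < S" using False assms(3) sum_nonneg[of I y] unfolding S_def by force
  moreover have "0 < N" using assms(1,2) by (simp add: N_def card_gt_0_iff)
  ultimately have "0 < m" by (simp add: m_def)
  \<comment> \<open>the tangent line of the concave t \<mapsto> t powr g at the mean m\<close>
  have tangent: "y i powr g * m powr (1-g) \<le> g * y i + (1-g) * m" if "i \<in> I" for i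
    using Youngs_inequality_0[of g "1-g" "y i" m] \<open>0 < m\<close> assms(3)[OF that] assms(4,5)
    by (cases "y i = 0") auto
  have "(\<Sum>i\<in>I. y i powr g) * m powr (1-g) \<le> (\<Sum>i\<in>I. g * y i + (1-g) * m)"
    unfolding sum_distrib_right by (intro sum_mono tangent)
  also have "\<dots> = g * S + (1-g) * N * m"
    by (simp add: sum.distrib S_def N_def flip: sum_distrib_left)
  also have "\<dots> = S"
    using \<open>0 < N\<close> by (simp add: m_def algebra_simps)
  also have "\<dots> = N powr (1-g) * S powr g * m powr (1-g)"
    using \<open>0 < S\<close> \<open>0 < N\<close> by (simp add: m_def powr_divide flip: powr_add)
  finally show ?thesis
    using \<open>0 < m\<close> by (simp add: S_def N_def)
qed

lemma double_sum_le_symmetrized: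
  fixes L R :: "'a \<Rightarrow> 'a \<Rightarrow> 'b::linordered_ab_group_add"
  assumes "\<And>i j. i \<in> A \<Longrightarrow> j \<in> A \<Longrightarrow> L i j + L j i \<le> R i j + R j i"
  shows "(\<Sum>i\<in>A. \<Sum>j\<in>A. L i j) \<le> (\<Sum>i\<in>A. \<Sum>j\<in>A. R i j)"
proof -
  have "(\<Sum>i\<in>A. \<Sum>j\<in>A. L i j) + (\<Sum>i\<in>A. \<Sum>j\<in>A. L i j) = (\<Sum>i\<in>A. \<Sum>j\<in>A. L i j + L j i)"
    by (simp add: sum.distrib sum.swap[of "\<lambda>i j. L j i"])
  also have "\<dots> \<le> (\<Sum>i\<in>A. \<Sum>j\<in>A. R i j + R j i)"
    by (intro sum_mono assms)
  also have "\<dots> = (\<Sum>i\<in>A. \<Sum>j\<in>A. R i j) + (\<Sum>i\<in>A. \<Sum>j\<in>A. R i j)"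
    by (simp add: sum.distrib sum.swap[of "\<lambda>i j. R j i"])
  finally show ?thesis
    by (meson add_strict_mono not_le)
qed

lemma rank_weighted_powr_eq_sum:
  fixes a :: "nat \<Rightarrow> real" and p :: real
  assumes "\<And>j. 0 \<le> a j" "i \<in> {1..n}"
  shows "a i powr (p+1) * (real i + (\<Sum>j\<in>{i<..n}. a j / a i))
           = (\<Sum>j=1..n. if j \<le> i then a i powr (p+1) else a i powr p * a j)"
proof -
  \<comment> \<open>also when a i = 0: then a j / a i = 0 and 0 powr p = 0\<close>
  have "a i powr (p+1) * (a j / a i) = a i powr p * a j" for j
    using assms(1)[of i] by (cases "a i = 0") (auto simp: powr_add)
  moreover have "{1..n} \<inter> {j. j \<le> i} = {1..i}" "{1..n} \<inter> - {j. j \<le> i} = {i<..n}"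
    using assms(2) by auto
  ultimately show ?thesis
    by (simp add: sum.If_cases distrib_left sum_distrib_left)
qed

lemma rank_weighted_sum_le_product:
  fixes a :: "nat \<Rightarrow> real" and r :: real
  assumes "\<And>j. 0 \<le> a j" "0 \<le> r" "r \<le> 1"
    and "\<And>i j. 1 \<le> i \<Longrightarrow> i \<le> j \<Longrightarrow> j \<le> n \<Longrightarrow> a j \<le> a i"
  shows "(\<Sum>i=1..n. a i powr (2*r+1) * (real i + (\<Sum>j\<in>{i<..n}. a j / a i)))
           \<le> (\<Sum>i=1..n. a i powr r) * (\<Sum>i=1..n. a i powr (r+1))"
proof -
  define L where "L i j = (if j \<le> i then a i powr (2*r+1) else a i powr (2*r) * a j)" for i j
  have "L i j + L j i \<le> a i powr r * a j powr (r+1) + a j powr r * a i powr (r+1)"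
    if "i \<in> {1..n}" "j \<in> {1..n}" for i j
  proof -
    consider "i < j" | "i = j" | "j < i" by linarith
    then show ?thesis
    proof cases
      case 1
      then show ?thesis
        using powr_cross_le[of "a j" "a i" r] assms that by (simp add: L_def)
    next
      case 2
      then show ?thesis by (simp add: L_def flip: powr_add)
    next
      case 3
      then show ?thesis
        using powr_cross_le[of "a i" "a j" r] assms that by (simp add: L_def add.commute)
    qed
  qed
  then have "(\<Sum>i=1..n. \<Sum>j=1..n. L i j) \<le> (\<Sum>i=1..n. \<Sum>j=1..n. a i powr r * a j powr (r+1))"
    by (rule double_sum_le_symmetrized)
  moreover have "(\<Sum>i=1..n. a i powr (2*r+1) * (real i + (\<Sum>j\<in>{i<..n}. a j / a i)))
      = (\<Sum>i=1..n. \<Sum>j=1..n. L i j)"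
    using rank_weighted_powr_eq_sum[of a _ n "2*r"] assms(1) by (simp add: L_def)
  ultimately show ?thesis
    by (simp add: sum_product)
qed

lemma rank_weighted_sum_le_powr_sum:
  fixes a :: "nat \<Rightarrow> real" and \<beta> :: real
  assumes "n \<ge> 1" "1/2 \<le> \<beta>" "\<beta> \<le> 1" "\<And>j. 0 \<le> a j"
    and "\<And>i j. 1 \<le> i \<Longrightarrow> i \<le> j \<Longrightarrow> j \<le> n \<Longrightarrow> a j \<le> a i"
  shows "(\<Sum>i=1..n. a i powr ((2 - \<beta>) / \<beta>) * (real i + (\<Sum>j\<in>{i<..n}. a j / a i)))
           \<le> real n powr \<beta> * (\<Sum>i=1..n. a i powr (1 / \<beta>)) powr (2 - \<beta>)"
proof -
  define r where "r = (1 - \<beta>) / \<beta>"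
  define S where "S = (\<Sum>i=1..n. a i powr (r+1))"
  have "0 < \<beta>" "0 \<le> r" "r \<le> 1" "(2 - \<beta>) / \<beta> = 2*r+1" "1 / \<beta> = r+1"
    using assms by (auto simp: r_def field_simps)
  have "0 \<le> S" unfolding S_def by (intro sum_nonneg) simp
  have "(\<Sum>i=1..n. a i powr r) = (\<Sum>i=1..n. (a i powr (r+1)) powr (1-\<beta>))"
    using \<open>0 < \<beta>\<close> by (simp add: powr_powr r_def field_simps)
  also have "\<dots> \<le> real n powr \<beta> * S powr (1-\<beta>)"
    using sum_powr_le_card_powr_sum[of "{1..n}" "\<lambda>i. a i powr (r+1)" "1-\<beta>"] assms
    by (simp add: S_def)
  finally have power_mean: "(\<Sum>i=1..n. a i powr r) \<le> real n powr \<beta> * S powr (1-\<beta>)" .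
  have "(\<Sum>i=1..n. a i powr (2*r+1) * (real i + (\<Sum>j\<in>{i<..n}. a j / a i)))
      \<le> (\<Sum>i=1..n. a i powr r) * S"
    unfolding S_def
    by (rule rank_weighted_sum_le_product) (use assms \<open>0 \<le> r\<close> \<open>r \<le> 1\<close> in auto)
  also have "\<dots> \<le> real n powr \<beta> * S powr (1-\<beta>) * S"
    using power_mean \<open>0 \<le> S\<close> by (rule mult_right_mono)
  also have "\<dots> = real n powr \<beta> * S powr (2-\<beta>)"
    using \<open>0 \<le> S\<close> powr_add[of S "1-\<beta>" 1] by (cases "S = 0") auto
  finally show ?thesis
    unfolding \<open>(2 - \<beta>) / \<beta> = 2*r+1\<close> \<open>1 / \<beta> = r+1\<close> S_def .
qed

lemma rank_weighted_sum_constant_eq: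
  fixes c \<beta> :: real
  assumes "c \<noteq> 0"
  shows "(\<Sum>i=1..n. \<bar>c\<bar> powr ((2 - \<beta>) / \<beta>) * (real i + (\<Sum>j\<in>{i<..n}. \<bar>c\<bar> / \<bar>c\<bar>)))
           = real n powr \<beta> * (\<Sum>i=1..n. \<bar>c\<bar> powr (1 / \<beta>)) powr (2 - \<beta>)"
proof (cases "n = 0")
  case False
  have "(\<Sum>i=1..n. \<bar>c\<bar> powr ((2 - \<beta>) / \<beta>) * (real i + (\<Sum>j\<in>{i<..n}. \<bar>c\<bar> / \<bar>c\<bar>)))
      = (\<Sum>i=1..n. \<bar>c\<bar> powr ((2 - \<beta>) / \<beta>) * real n)"
    using assms by (intro sum.cong) auto
  also have "\<dots> = real n powr \<beta> * (real n * \<bar>c\<bar> powr (1 / \<beta>)) powr (2 - \<beta>)"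
    using False assms by (simp add: powr_mult powr_powr power2_eq_square flip: powr_add)
  finally show ?thesis by simp
qed simp

theorem lemma2:
  fixes n :: nat and \<beta> :: real and x :: "nat \<Rightarrow> real"
  assumes "n \<ge> 1"
    and "1/2 \<le> \<beta>" and "\<beta> \<le> 1"
    and "\<And>i j. 1 \<le> i \<Longrightarrow> i \<le> j \<Longrightarrow> j \<le> n \<Longrightarrow> \<bar>x j\<bar> \<le> \<bar>x i\<bar>"
  shows "(\<Sum>i=1..n. \<bar>x i\<bar> powr ((2 - \<beta>) / \<beta>) * (real i + (\<Sum>j\<in>{i<..n}. \<bar>x j\<bar> / \<bar>x i\<bar>)))
           \<le> real n powr \<beta> * (\<Sum>i=1..n. \<bar>x i\<bar> powr (1 / \<beta>)) powr (2 - \<beta>)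
    \<and> (\<forall>c::real. c \<noteq> 0 \<longrightarrow>
           (\<Sum>i=1..n. \<bar>c\<bar> powr ((2 - \<beta>) / \<beta>) * (real i + (\<Sum>j\<in>{i<..n}. \<bar>c\<bar> / \<bar>c\<bar>)))
           = real n powr \<beta> * (\<Sum>i=1..n. \<bar>c\<bar> powr (1 / \<beta>)) powr (2 - \<beta>))"
  using rank_weighted_sum_le_powr_sum[of n \<beta> "\<lambda>i. \<bar>x i\<bar>"] rank_weighted_sum_constant_eq assms by auto

end
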